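(* Let $X$ be a topological space in which every point has a fundamental system of compact neighbourhoods, and let $L\subset X$ be a compact subspace which is separated in $X$. Then $L$ admits an open neighbourhood in $X$ which is Hausdorff.
   Context: Compact means quasi-compact and Hausdorff (Bourbaki's convention). A subset $A\subset X$ is separated in $X$ if any two distinct points of $A$ admit disjoint open neighbourhoods in $X$. *)

theory Defs
  imports "HOL-Analysis.Analysis"
begin

definition bourbaki_compactin :: "'a topology \<Rightarrow> 'a set \<Rightarrow> bool" where
  "bourbaki_compactin X K \<longleftrightarrow> compactin X K \<and> Hausdorff_space (subtopology X K)"

definition separated_in :: "'a topology \<Rightarrow> 'a set \<Rightarrow> bool" where
  "separated_in X A \<longleftrightarrow> A \<subseteq> topspace X \<and>
     (\<forall>x\<in>A. \<forall>y\<in>A. x \<noteq> y \<longrightarrow>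
        (\<exists>U V. openin X U \<and> openin X V \<and> x \<in> U \<and> y \<in> V \<and> disjnt U V))"

definition has_compact_nbhd_basis :: "'a topology \<Rightarrow> bool" where
  "has_compact_nbhd_basis X \<longleftrightarrow>
     (\<forall>x U. openin X U \<and> x \<in> U \<longrightarrow>
        (\<exists>K V. openin X V \<and> x \<in> V \<and> V \<subseteq> K \<and> K \<subseteq> U \<and> bourbaki_compactin X K))"

end

theory Submission
  imports Defs
begin

text \<open>Call two points separated if they are equal or have disjoint open neighbourhoods in X.
  Every point of L has an open neighbourhood, inside a compact (hence Hausdorff) one, any two of
  whose points are separated; distinct points of L are separated by hypothesis. Two rounds of the
  tube-lemma argument over the compact set L then give open sets A, B containing L with every
  pair in A \<times> B separated, so W = A \<inter> B is a Hausdorff open neighbourhood of L.\<close>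

definition separated_pairs :: "'a topology \<Rightarrow> ('a \<times> 'a) set" where
  "separated_pairs X = {(a, b). a = b \<or>
     (\<exists>U V. openin X U \<and> openin X V \<and> a \<in> U \<and> b \<in> V \<and> disjnt U V)}"

lemma converse_separated_pairs [simp]: "(separated_pairs X)\<inverse> = separated_pairs X"
  unfolding separated_pairs_def by (auto dest: disjnt_sym)

lemma Hausdorff_space_subtopology_if_separated_pairs:
  assumes "W \<times> W \<subseteq> separated_pairs X"
  shows "Hausdorff_space (subtopology X W)"
  unfolding Hausdorff_space_def
proof (intro allI impI)
  fix u v
  assume "u \<in> topspace (subtopology X W) \<and> v \<in> topspace (subtopology X W) \<and> u \<noteq> v"
  then have uv: "u \<in> W" "v \<in> W" "u \<noteq> v" by auto
  then obtain U V where UV: "openin X U" "openin X V" "u \<in> U" "v \<in> V" "disjnt U V"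
    using assms unfolding separated_pairs_def by blast
  have "openin (subtopology X W) (U \<inter> W)" "openin (subtopology X W) (V \<inter> W)"
    using UV(1,2) by (auto simp: openin_subtopology)
  moreover have "disjnt (U \<inter> W) (V \<inter> W)"
    using UV(5) by (auto simp: disjnt_def)
  ultimately show "\<exists>U V. openin (subtopology X W) U \<and> openin (subtopology X W) V \<and>
      u \<in> U \<and> v \<in> V \<and> disjnt U V"
    using UV(3,4) uv by blast
qed

lemma separated_pairs_if_Hausdorff_superset:
  assumes "openin X V" "V \<subseteq> K" "Hausdorff_space (subtopology X K)"
  shows "V \<times> V \<subseteq> separated_pairs X"
proof clarify
  fix a b
  assume ab: "a \<in> V" "b \<in> V"
  show "(a, b) \<in> separated_pairs X"
  proof (cases "a = b")
    case False
    have "a \<in> topspace (subtopology X K)" "b \<in> topspace (subtopology X K)"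
      using ab assms(1,2) openin_subset by fastforce+
    then obtain U1 U2 where U: "openin (subtopology X K) U1" "openin (subtopology X K) U2"
      "a \<in> U1" "b \<in> U2" "disjnt U1 U2"
      using assms(3) False unfolding Hausdorff_space_def by blast
    obtain T1 T2 where T: "openin X T1" "U1 = T1 \<inter> K" "openin X T2" "U2 = T2 \<inter> K"
      using U(1,2) unfolding openin_subtopology by blast
    have "openin X (T1 \<inter> V)" "openin X (T2 \<inter> V)"
      using T(1,3) assms(1) by (simp_all add: openin_Int)
    moreover have "disjnt (T1 \<inter> V) (T2 \<inter> V)"
      using U(5) T(2,4) assms(2) unfolding disjnt_def by blast
    ultimately show ?thesis
      using U(3,4) T(2,4) ab unfolding separated_pairs_def by blast
  qed (simp add: separated_pairs_def)
qed

text \<open>The tube lemma for an arbitrary relation R in place of an open set of a product.\<close>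

lemma compactin_tube_relation:
  assumes K: "compactin X K" and S: "S \<subseteq> topspace X"
    and local: "\<And>y. y \<in> K \<Longrightarrow>
      \<exists>A B. openin X A \<and> openin X B \<and> S \<subseteq> A \<and> y \<in> B \<and> A \<times> B \<subseteq> R"
  obtains A B where "openin X A" "openin X B" "S \<subseteq> A" "K \<subseteq> B" "A \<times> B \<subseteq> R"
proof -
  obtain A B where A: "\<And>y. y \<in> K \<Longrightarrow> openin X (A y) \<and> S \<subseteq> A y"
    and B: "\<And>y. y \<in> K \<Longrightarrow> openin X (B y) \<and> y \<in> B y"
    and AB: "\<And>y. y \<in> K \<Longrightarrow> A y \<times> B y \<subseteq> R"
    using local by metis
  obtain \<F> where \<F>: "finite \<F>" "\<F> \<subseteq> B ` K" "K \<subseteq> \<Union>\<F>"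
    using compactinD[OF K, of "B ` K"] B by blast
  then obtain F where F: "finite F" "F \<subseteq> K" "\<F> = B ` F"
    by (meson finite_subset_image)
  let ?A = "topspace X \<inter> \<Inter>(A ` F)" and ?B = "\<Union>(B ` F)"
  show thesis
  proof
    show "openin X ?A"
      using F A by (intro openin_Int_Inter) auto
    show "openin X ?B"
      using F B by (intro openin_Union) auto
    show "S \<subseteq> ?A"
      using S F(2) A by blast
    show "K \<subseteq> ?B"
      using \<F>(3) F(3) by simp
    show "?A \<times> ?B \<subseteq> R"
    proof
      fix p assume "p \<in> ?A \<times> ?B"
      then obtain y where "y \<in> F" "p \<in> A y \<times> B y"
        by auto
      then show "p \<in> R"
        using AB F(2) by blast
    qed
  qed
qed

lemma separated_pairs_near_separated_compact:
  assumes "has_compact_nbhd_basis X" "separated_in X L" "x \<in> L" "y \<in> L"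
  shows "\<exists>A B. openin X A \<and> openin X B \<and> x \<in> A \<and> y \<in> B \<and> A \<times> B \<subseteq> separated_pairs X"
proof (cases "x = y")
  case True
  have "openin X (topspace X)" "x \<in> topspace X"
    using assms(2,3) unfolding separated_in_def by auto
  then obtain K V where V: "openin X V" "x \<in> V" "V \<subseteq> K" and "bourbaki_compactin X K"
    using assms(1) unfolding has_compact_nbhd_basis_def by meson
  then have "Hausdorff_space (subtopology X K)"
    unfolding bourbaki_compactin_def by simp
  then have "V \<times> V \<subseteq> separated_pairs X"
    using V(1,3) by (intro separated_pairs_if_Hausdorff_superset)
  then show ?thesis
    using V(1,2) True by blast
next
  case False
  then obtain U V where UV: "openin X U" "openin X V" "x \<in> U" "y \<in> V" "disjnt U V"
    using assms(2-4) unfolding separated_in_def by meson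
  then have "U \<times> V \<subseteq> separated_pairs X"
    unfolding separated_pairs_def by blast
  then show ?thesis
    using UV by blast
qed

theorem proposition6p12:
  fixes X :: "'a topology" and L :: "'a set"
  assumes "has_compact_nbhd_basis X"
    and "bourbaki_compactin X L"
    and "separated_in X L"
  shows "\<exists>W. openin X W \<and> L \<subseteq> W \<and> Hausdorff_space (subtopology X W)"
proof -
  have L: "compactin X L" "L \<subseteq> topspace X"
    using assms(2) unfolding bourbaki_compactin_def by (auto dest: compactin_subset_topspace)
  have point_tube: "\<exists>A B. openin X A \<and> openin X B \<and> L \<subseteq> A \<and> x \<in> B \<and>
      A \<times> B \<subseteq> separated_pairs X" if x: "x \<in> L" for x
  proof -
    obtain B A where "openin X B" "openin X A" "{x} \<subseteq> B" "L \<subseteq> A"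
        "B \<times> A \<subseteq> separated_pairs X"
    proof (rule compactin_tube_relation[OF L(1)])
      show "{x} \<subseteq> topspace X" using x L(2) by blast
      show "\<exists>B A. openin X B \<and> openin X A \<and> {x} \<subseteq> B \<and> y \<in> A \<and> B \<times> A \<subseteq> separated_pairs X"
        if "y \<in> L" for y
        using separated_pairs_near_separated_compact[OF assms(1,3) x that] by blast
    qed
    moreover from this have "A \<times> B \<subseteq> (separated_pairs X)\<inverse>"
      by blast
    ultimately show ?thesis by auto
  qed
  obtain A B where AB: "openin X A" "openin X B" "L \<subseteq> A" "L \<subseteq> B"
      "A \<times> B \<subseteq> separated_pairs X"
    using compactin_tube_relation[OF L point_tube] by blast
  have "(A \<inter> B) \<times> (A \<inter> B) \<subseteq> separated_pairs X"
    using AB(5) by blast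
  then have "Hausdorff_space (subtopology X (A \<inter> B))"
    by (rule Hausdorff_space_subtopology_if_separated_pairs)
  moreover have "openin X (A \<inter> B)"
    using AB(1,2) by (rule openin_Int)
  ultimately show ?thesis
    using AB(3,4) by blast
qed

end
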